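(* Let $(X,P)$ be an $(N,s)$-pre-tiling space, let $Y$ be a metric space, and let $f:X\to Y$ be a surjective $(L,\gamma)$-homogeneously bi-Hölder map. Define the covering structure $Q$ on $Y$ by $\mathrm{dom}(Q)=\mathrm{dom}(P)$ and $Q_n=\{f(A):A\in P_n\}$. Then $(Y,Q)$ is an $(N,s^\gamma)$-pre-tiling space.
   Context: For $L\ge1$, $\gamma>0$, a map $f:X\to Y$ is $(L,\gamma)$-homogeneously bi-Hölder if $L^{-1}d_X(x,y)^\gamma\le d_Y(f(x),f(y))\le Ld_X(x,y)^\gamma$ for all $x,y\in X$. $\mathbb{N}=\{0,1,\dots\}$. A covering structure on a set $Z$ is a map $P$ from $\mathbb{N}$ or $\mathbb{Z}$ to coverings of $Z$; $P_n$ its value, $\mathrm{dom}(P)$ its domain; $[T]_k=\{A\in P_{n+k}:A\subset T\}$ for $T\in P_n$. $(Z,P)$ is an $N$-tiling set if (S1) for $n<m$ in $\mathrm{dom}(P)$, $A\in P_n$: $\mathrm{card}[A]_{m-n}=N^{m-n}$ and $A=\bigcup[A]_{m-n}$; (S2) for $A,B\in P_n$ there exist $m$ and $C\in P_m$ with $A\cup B\subset C$. For $Z$ a metric space ($\delta$ = diameter, $U(p,r)$ open ball), $s\in(0,\infty)$, an $N$-tiling set is an $(N,s)$-pre-tiling space if (T1) there are $D_1,D_2>0$ with $D_1\le\delta(A)/s^n\le D_2$ for all $n\in\mathrm{dom}(P)$, $A\in P_n$; (T2) there is $E>0$ such that every $A\in P_n$ contains some $p_A$ with $U(p_A,Es^n)\subset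 A$. *)

theory Defs
  imports "HOL-Analysis.Analysis"
begin

text \<open>Metric spaces are modelled as carrier sets X inside a type of class metric_space.
  A covering structure on Z is a pair (D, P) with D the domain (the naturals {0..} or all
  integers, as a set of integers) and P n a covering of Z for each n in D.\<close>

definition homog_bi_holder :: "real \<Rightarrow> real \<Rightarrow> 'a::metric_space set \<Rightarrow> ('a \<Rightarrow> 'b::metric_space) \<Rightarrow> bool" where
  "homog_bi_holder L \<gamma> X f \<longleftrightarrow> L \<ge> 1 \<and> \<gamma> > 0 \<and>
     (\<forall>x\<in>X. \<forall>y\<in>X. inverse L * dist x y powr \<gamma> \<le> dist (f x) (f y)
                  \<and> dist (f x) (f y) \<le> L * dist x y powr \<gamma>)"

definition covering_structure :: "int set \<Rightarrow> 'a set \<Rightarrow> (int \<Rightarrow> 'a set set) \<Rightarrow> bool" where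
  "covering_structure D Z P \<longleftrightarrow> (D = {0..} \<or> D = UNIV) \<and>
     (\<forall>n\<in>D. (\<forall>A\<in>P n. A \<subseteq> Z) \<and> \<Union>(P n) = Z)"

definition subtiles :: "(int \<Rightarrow> 'a set set) \<Rightarrow> int \<Rightarrow> nat \<Rightarrow> 'a set \<Rightarrow> 'a set set" where
  "subtiles P n k T = {A \<in> P (n + int k). A \<subseteq> T}"

definition tiling_set :: "nat \<Rightarrow> int set \<Rightarrow> 'a set \<Rightarrow> (int \<Rightarrow> 'a set set) \<Rightarrow> bool" where
  "tiling_set N D Z P \<longleftrightarrow> covering_structure D Z P \<and>
     (\<forall>n\<in>D. \<forall>m\<in>D. n < m \<longrightarrow> (\<forall>A\<in>P n.
         finite (subtiles P n (nat (m - n)) A) \<and>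
         card (subtiles P n (nat (m - n)) A) = N ^ nat (m - n) \<and>
         A = \<Union>(subtiles P n (nat (m - n)) A))) \<and>
     (\<forall>n\<in>D. \<forall>A\<in>P n. \<forall>B\<in>P n. \<exists>m\<in>D. \<exists>C\<in>P m. A \<union> B \<subseteq> C)"

definition pre_tiling_space :: "nat \<Rightarrow> real \<Rightarrow> int set \<Rightarrow> 'a::metric_space set \<Rightarrow> (int \<Rightarrow> 'a set set) \<Rightarrow> bool" where
  "pre_tiling_space N s D Z P \<longleftrightarrow> s > 0 \<and> tiling_set N D Z P \<and>
     (\<exists>D1 D2. D1 > 0 \<and> D2 > 0 \<and> (\<forall>n\<in>D. \<forall>A\<in>P n.
        D1 \<le> diameter A / s powr (real_of_int n) \<and> diameter A / s powr (real_of_int n) \<le> D2)) \<and>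
     (\<exists>E>0. \<forall>n\<in>D. \<forall>A\<in>P n. \<exists>p\<in>A. ball p (E * s powr (real_of_int n)) \<inter> Z \<subseteq> A)"

end

theory Submission
  imports Defs
begin

text \<open>A homogeneously bi-Hoelder map f distorts every distance d to somewhere between
  d^\<gamma>/L and L d^\<gamma>; in particular it is injective, so it transports the combinatorics of the
  tiling (numbers of subtiles, unions, common supertiles) unchanged to the image tiles. A tile of
  diameter comparable to s^n has an image of diameter comparable to (s^n)^\<gamma> = (s^\<gamma>)^n,
  and a ball of radius E s^n inside a tile maps onto a set containing the ball of radius
  E^\<gamma> (s^\<gamma>)^n / L about the image of its centre.\<close>

lemma diameter_image_le_powr:
  fixes g :: "'c \<Rightarrow> 'a::metric_space" and h :: "'c \<Rightarrow> 'b::metric_space"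
  assumes bounded: "bounded (h ` A)" and C: "C \<ge> 0" and \<beta>: "\<beta> > 0"
    and holder: "\<And>x y. x \<in> A \<Longrightarrow> y \<in> A \<Longrightarrow> dist (g x) (g y) \<le> C * dist (h x) (h y) powr \<beta>"
  shows "bounded (g ` A)" and "diameter (g ` A) \<le> C * diameter (h ` A) powr \<beta>"
proof -
  have pointwise: "dist (g x) (g y) \<le> C * diameter (h ` A) powr \<beta>" if "x \<in> A" "y \<in> A" for x y
  proof -
    have "dist (h x) (h y) \<le> diameter (h ` A)"
      using diameter_bounded_bound[OF bounded] that by auto
    then have "C * dist (h x) (h y) powr \<beta> \<le> C * diameter (h ` A) powr \<beta>"
      using C \<beta> by (intro mult_left_mono powr_mono2) auto
    then show ?thesis
      using holder[OF that] by linarith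
  qed
  then show "bounded (g ` A)"
    unfolding bounded_two_points by blast
  show "diameter (g ` A) \<le> C * diameter (h ` A) powr \<beta>"
    using pointwise C unfolding diameter_def[of "g ` A"] by (auto intro!: cSUP_least)
qed

text \<open>(LEAST z. False) is the junk value of Sup on real sets unbounded above, so all
  unbounded sets share the same diameter.\<close>
lemma diameter_unbounded:
  fixes S :: "'a::metric_space set"
  assumes "\<not> bounded S"
  shows "diameter S = (LEAST z::real. False)"
proof -
  have "(\<lambda>z. \<forall>x\<in>S. \<forall>y\<in>S. dist x y \<le> z) = (\<lambda>z. False)"
    using assms unfolding bounded_two_points by (auto intro!: ext)
  moreover have "S \<noteq> {}"
    using assms by auto
  ultimately show ?thesis
    unfolding diameter_def Sup_real_def by (simp add: case_prod_unfold)
qed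

lemma power_bounded_imp_eq_one:
  fixes s a b :: real
  assumes "s > 0" "a > 0" and bounds: "\<And>k. a \<le> s ^ k \<and> s ^ k \<le> b"
  shows "s = 1"
proof (rule linorder_cases[of s 1])
  assume "s > 1"
  then obtain k where "b < s ^ k"
    using real_arch_pow by blast
  then show ?thesis
    using bounds[of k] by simp
next
  assume "s < 1"
  then obtain k where "s ^ k < a"
    using real_arch_pow_inv \<open>a > 0\<close> by blast
  then show ?thesis
    using bounds[of k] by simp
qed

lemma homog_bi_holder_dist_le:
  assumes hb: "homog_bi_holder L \<gamma> X f" and "x \<in> X" "y \<in> X"
  shows "dist x y \<le> L powr (1 / \<gamma>) * dist (f x) (f y) powr (1 / \<gamma>)"
proof -
  have L: "L \<ge> 1" and \<gamma>: "\<gamma> > 0"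
    and lower: "inverse L * dist x y powr \<gamma> \<le> dist (f x) (f y)"
    using assms unfolding homog_bi_holder_def by auto
  then have "dist x y powr \<gamma> \<le> L * dist (f x) (f y)"
    by (simp add: field_simps)
  then have "(dist x y powr \<gamma>) powr (1 / \<gamma>) \<le> (L * dist (f x) (f y)) powr (1 / \<gamma>)"
    using \<gamma> by (intro powr_mono2) auto
  then show ?thesis
    using L \<gamma> by (simp add: powr_powr powr_mult)
qed

lemma homog_bi_holder_inj_on:
  assumes "homog_bi_holder L \<gamma> X f"
  shows "inj_on f X"
proof (rule inj_onI)
  fix x y assume "x \<in> X" "y \<in> X" "f x = f y"
  then have "dist x y \<le> 0"
    using homog_bi_holder_dist_le[OF assms] assms
    by (fastforce simp: homog_bi_holder_def)
  then show "x = y" by simp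
qed

lemma homog_bi_holder_bounded_image_iff:
  assumes hb: "homog_bi_holder L \<gamma> X f" and "A \<subseteq> X"
  shows "bounded (f ` A) \<longleftrightarrow> bounded A"
proof -
  have "L > 0" "\<gamma> > 0" and upper: "\<forall>x\<in>X. \<forall>y\<in>X. dist (f x) (f y) \<le> L * dist x y powr \<gamma>"
    using hb unfolding homog_bi_holder_def by auto
  show ?thesis
  proof
    show "bounded A \<Longrightarrow> bounded (f ` A)"
      using diameter_image_le_powr(1)[of "\<lambda>x. x" A L \<gamma> f] \<open>L > 0\<close> \<open>\<gamma> > 0\<close> upper
        \<open>A \<subseteq> X\<close> by auto
    show "bounded (f ` A) \<Longrightarrow> bounded A"
      using diameter_image_le_powr(1)[of f A "L powr (1 / \<gamma>)" "1 / \<gamma>" "\<lambda>x. x"] \<open>\<gamma> > 0\<close>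
        homog_bi_holder_dist_le[OF hb] \<open>A \<subseteq> X\<close> by auto
  qed
qed

lemma homog_bi_holder_diameter_image:
  assumes hb: "homog_bi_holder L \<gamma> X f" and A: "A \<subseteq> X" "bounded A"
  shows "diameter (f ` A) \<le> L * diameter A powr \<gamma>"
    and "diameter A powr \<gamma> \<le> L * diameter (f ` A)"
proof -
  have L: "L \<ge> 1" and \<gamma>: "\<gamma> > 0"
    and upper: "\<forall>x\<in>X. \<forall>y\<in>X. dist (f x) (f y) \<le> L * dist x y powr \<gamma>"
    using hb unfolding homog_bi_holder_def by auto
  show "diameter (f ` A) \<le> L * diameter A powr \<gamma>"
    using diameter_image_le_powr(2)[of "\<lambda>x. x" A L \<gamma> f] L \<gamma> upper A by auto
  have "bounded (f ` A)"
    using homog_bi_holder_bounded_image_iff[OF hb] A by blast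
  then have "diameter A \<le> L powr (1 / \<gamma>) * diameter (f ` A) powr (1 / \<gamma>)"
    using diameter_image_le_powr(2)[of f A "L powr (1 / \<gamma>)" "1 / \<gamma>" "\<lambda>x. x"]
      homog_bi_holder_dist_le[OF hb] A \<gamma> by auto
  then have "diameter A powr \<gamma> \<le> (L powr (1 / \<gamma>) * diameter (f ` A) powr (1 / \<gamma>)) powr \<gamma>"
    using \<gamma> A by (intro powr_mono2) (auto simp: diameter_ge_0)
  also have "\<dots> = L * diameter (f ` A)"
    using L \<gamma> \<open>bounded (f ` A)\<close> by (simp add: powr_mult powr_powr diameter_ge_0)
  finally show "diameter A powr \<gamma> \<le> L * diameter (f ` A)" .
qed

lemma homog_bi_holder_image_ball_subset:
  assumes hb: "homog_bi_holder L \<gamma> X f" and "r \<ge> 0" and ball: "ball p r \<inter> X \<subseteq> A"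
    and "p \<in> X"
  shows "ball (f p) (inverse L * r powr \<gamma>) \<inter> f ` X \<subseteq> f ` A"
proof
  fix y assume y: "y \<in> ball (f p) (inverse L * r powr \<gamma>) \<inter> f ` X"
  then obtain x where x: "x \<in> X" "y = f x" by auto
  have L: "L \<ge> 1" and \<gamma>: "\<gamma> > 0" and lower: "inverse L * dist p x powr \<gamma> \<le> dist (f p) (f x)"
    using hb x \<open>p \<in> X\<close> unfolding homog_bi_holder_def by auto
  have "dist p x < r"
  proof (rule ccontr)
    assume "\<not> dist p x < r"
    then have "r powr \<gamma> \<le> dist p x powr \<gamma>"
      using \<gamma> \<open>r \<ge> 0\<close> by (intro powr_mono2) auto
    then have "inverse L * r powr \<gamma> \<le> inverse L * dist p x powr \<gamma>"
      using L by (intro mult_left_mono) auto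
    then have "inverse L * r powr \<gamma> \<le> dist (f p) (f x)"
      using lower by linarith
    then show False
      using y x by auto
  qed
  then show "y \<in> f ` A"
    using ball x by auto
qed

lemma covering_structure_add_nat_mem:
  assumes "covering_structure D Z P" "n \<in> D"
  shows "n + int k \<in> D"
  using assms unfolding covering_structure_def by auto

lemma covering_structure_tile_subset:
  "covering_structure D Z P \<Longrightarrow> n \<in> D \<Longrightarrow> A \<in> P n \<Longrightarrow> A \<subseteq> Z"
  unfolding covering_structure_def by auto

lemma tiling_set_covering_structure:
  "tiling_set N D Z P \<Longrightarrow> covering_structure D Z P"
  unfolding tiling_set_def by (rule conjunct1)

lemma tiling_set_subtiles:
  assumes tiling: "tiling_set N D Z P" and "n \<in> D" "A \<in> P n" "k > 0"
  shows "finite (subtiles P n k A)" "card (subtiles P n k A) = N ^ k" "A = \<Union>(subtiles P n k A)"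
proof -
  have m: "n + int k \<in> D"
    using tiling_set_covering_structure[OF tiling] \<open>n \<in> D\<close> by (rule covering_structure_add_nat_mem)
  have lt: "n < n + int k" and k: "nat (n + int k - n) = k"
    using \<open>k > 0\<close> by auto
  have "\<forall>n\<in>D. \<forall>m\<in>D. n < m \<longrightarrow> (\<forall>A\<in>P n.
      finite (subtiles P n (nat (m - n)) A) \<and> card (subtiles P n (nat (m - n)) A) = N ^ nat (m - n) \<and>
      A = \<Union>(subtiles P n (nat (m - n)) A))"
    using tiling unfolding tiling_set_def by (elim conjE)
  from this[rule_format, OF \<open>n \<in> D\<close> m lt \<open>A \<in> P n\<close>, unfolded k]
  show "finite (subtiles P n k A)" "card (subtiles P n k A) = N ^ k" "A = \<Union>(subtiles P n k A)"
    by blast+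
qed

lemma tiling_set_unbounded_subtile:
  fixes P :: "int \<Rightarrow> 'a::metric_space set set"
  assumes tiling: "tiling_set N D Z P" and A: "n \<in> D" "A \<in> P n" "\<not> bounded A"
  shows "\<exists>A'\<in>P (n + int k). \<not> bounded A'"
proof (cases "k = 0")
  case True
  then show ?thesis
    using A by auto
next
  case False
  then have "k > 0"
    by simp
  then have "\<exists>A'\<in>subtiles P n k A. \<not> bounded A'"
    using tiling_set_subtiles(1,3)[OF tiling A(1,2)] A(3) bounded_Union by metis
  then show ?thesis
    unfolding subtiles_def by auto
qed

lemma covering_structure_image:
  assumes "covering_structure D Z P"
  shows "covering_structure D (f ` Z) (\<lambda>n. (\<lambda>A. f ` A) ` P n)"
  using assms unfolding covering_structure_def by (auto simp flip: image_Union)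

lemma subtiles_image:
  assumes "inj_on f Z" "\<And>B. B \<in> P (n + int k) \<Longrightarrow> B \<subseteq> Z" "A \<subseteq> Z"
  shows "subtiles (\<lambda>n. (\<lambda>A. f ` A) ` P n) n k (f ` A) = (\<lambda>A. f ` A) ` subtiles P n k A"
  using assms unfolding subtiles_def by (auto simp: inj_on_image_subset_iff)

lemma tiling_set_joinable:
  assumes "tiling_set N D Z P" "n \<in> D" "A \<in> P n" "B \<in> P n"
  obtains m C where "m \<in> D" "C \<in> P m" "A \<union> B \<subseteq> C"
proof -
  have "\<forall>n\<in>D. \<forall>A\<in>P n. \<forall>B\<in>P n. \<exists>m\<in>D. \<exists>C\<in>P m. A \<union> B \<subseteq> C"
    using assms(1) unfolding tiling_set_def by (elim conjE)
  then show ?thesis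
    using assms(2-4) that by blast
qed

lemma tiling_set_image_subtiles:
  assumes tiling: "tiling_set N D Z P" and inj: "inj_on f Z" and A: "n \<in> D" "A \<in> P n"
    and "k > 0"
  defines "Q \<equiv> \<lambda>n. (\<lambda>A. f ` A) ` P n"
  shows "finite (subtiles Q n k (f ` A)) \<and> card (subtiles Q n k (f ` A)) = N ^ k \<and>
    f ` A = \<Union>(subtiles Q n k (f ` A))"
proof -
  have cov: "covering_structure D Z P"
    using tiling by (rule tiling_set_covering_structure)
  have "n + int k \<in> D"
    using cov \<open>n \<in> D\<close> by (rule covering_structure_add_nat_mem)
  then have subtiles_subset: "subtiles P n k A \<subseteq> Pow Z"
    using covering_structure_tile_subset[OF cov] unfolding subtiles_def by auto
  have image: "subtiles Q n k (f ` A) = (\<lambda>A. f ` A) ` subtiles P n k A"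
    unfolding Q_def
    using subtiles_image[OF inj covering_structure_tile_subset[OF cov \<open>n + int k \<in> D\<close>]
        covering_structure_tile_subset[OF cov A]] .
  note subdivision = tiling_set_subtiles[OF tiling A \<open>k > 0\<close>]
  have "inj_on (\<lambda>A. f ` A) (subtiles P n k A)"
    using inj_on_image_Pow[OF inj] subtiles_subset by (rule inj_on_subset)
  moreover have "f ` A = \<Union>((\<lambda>A. f ` A) ` subtiles P n k A)"
    using arg_cong[OF subdivision(3), of "image f"] by (simp only: image_Union)
  ultimately show ?thesis
    unfolding image using subdivision(1,2) by (simp add: card_image)
qed

lemma tiling_set_image:
  assumes tiling: "tiling_set N D Z P" and inj: "inj_on f Z"
  shows "tiling_set N D (f ` Z) (\<lambda>n. (\<lambda>A. f ` A) ` P n)"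
proof -
  let ?Q = "\<lambda>n. (\<lambda>A. f ` A) ` P n"
  have subdivisions: "\<forall>n\<in>D. \<forall>m\<in>D. n < m \<longrightarrow> (\<forall>B\<in>?Q n. finite (subtiles ?Q n (nat (m - n)) B) \<and>
      card (subtiles ?Q n (nat (m - n)) B) = N ^ nat (m - n) \<and> B = \<Union>(subtiles ?Q n (nat (m - n)) B))"
  proof (intro ballI impI)
    fix n m B assume "n \<in> D" "m \<in> D" "n < m" "B \<in> ?Q n"
    then obtain A where "A \<in> P n" and B: "B = f ` A"
      by auto
    from \<open>n < m\<close> have "nat (m - n) > 0"
      by simp
    then show "finite (subtiles ?Q n (nat (m - n)) B) \<and>
        card (subtiles ?Q n (nat (m - n)) B) = N ^ nat (m - n) \<and> B = \<Union>(subtiles ?Q n (nat (m - n)) B)"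
      unfolding B by (rule tiling_set_image_subtiles[OF tiling inj \<open>n \<in> D\<close> \<open>A \<in> P n\<close>])
  qed
  have joinable: "\<exists>m\<in>D. \<exists>C\<in>?Q m. B1 \<union> B2 \<subseteq> C" if "n \<in> D" and B: "B1 \<in> ?Q n" "B2 \<in> ?Q n" for n B1 B2
  proof -
    obtain A1 A2 where A: "A1 \<in> P n" "A2 \<in> P n" "B1 = f ` A1" "B2 = f ` A2"
      using B by auto
    moreover obtain m C where "m \<in> D" "C \<in> P m" "A1 \<union> A2 \<subseteq> C"
      using tiling_set_joinable[OF tiling \<open>n \<in> D\<close> A(1,2)] by blast
    ultimately show ?thesis
      by blast
  qed
  show ?thesis
    unfolding tiling_set_def
    by (intro covering_structure_image[OF tiling_set_covering_structure[OF tiling]] subdivisions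
        joinable conjI ballI)
qed

text \<open>(T1) does not exclude unbounded tiles, because their diameter is a junk value. Every
  level then contains an unbounded tile of that same diameter, so (T1) traps all powers of s
  between two positive bounds.\<close>
lemma pre_tiling_space_unbounded_tile_imp_scale_one:
  fixes P :: "int \<Rightarrow> 'a::metric_space set set"
  assumes pts: "pre_tiling_space N s D Z P" and A: "n \<in> D" "A \<in> P n" "\<not> bounded A"
  shows "s = 1"
proof -
  obtain D1 D2 where D: "D1 > 0" "D2 > 0" and T1: "\<forall>n\<in>D. \<forall>A\<in>P n.
      D1 \<le> diameter A / s powr real_of_int n \<and> diameter A / s powr real_of_int n \<le> D2"
    using pts unfolding pre_tiling_space_def by blast
  have s: "s > 0" and tiling: "tiling_set N D Z P"
    using pts unfolding pre_tiling_space_def by auto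
  define t where "t = s powr real_of_int n"
  have t: "t > 0"
    using s by (simp add: t_def)
  have bounds: "D1 * (t * s ^ k) \<le> diameter A \<and> diameter A \<le> D2 * (t * s ^ k)" for k
  proof -
    obtain A' where A': "A' \<in> P (n + int k)" "\<not> bounded A'"
      using tiling_set_unbounded_subtile[OF tiling A] by blast
    have "n + int k \<in> D"
      using tiling_set_covering_structure[OF tiling] A(1) by (rule covering_structure_add_nat_mem)
    then have "D1 \<le> diameter A' / s powr real_of_int (n + int k)"
      "diameter A' / s powr real_of_int (n + int k) \<le> D2"
      using T1 A'(1) by auto
    moreover have "s powr real_of_int (n + int k) = t * s ^ k"
      using s by (simp add: t_def powr_add powr_realpow)
    moreover have "diameter A' = diameter A"
      using diameter_unbounded A'(2) A(3) by metis
    moreover have "t * s ^ k > 0"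
      using s t by simp
    ultimately show ?thesis
      by (simp add: pos_le_divide_eq pos_divide_le_eq)
  qed
  have "diameter A > 0"
    using bounds[of 0] mult_pos_pos[OF \<open>D1 > 0\<close> t] by simp
  show "s = 1"
  proof (rule power_bounded_imp_eq_one[OF s])
    show "diameter A / (D2 * t) > 0"
      using \<open>diameter A > 0\<close> D t by simp
    show "diameter A / (D2 * t) \<le> s ^ k \<and> s ^ k \<le> diameter A / (D1 * t)" for k
      using bounds[of k] D t by (simp add: field_simps)
  qed
qed

lemma homog_bi_holder_diameter_image_bounds:
  assumes hb: "homog_bi_holder L \<gamma> X f" and A: "A \<subseteq> X" "bounded A"
    and "t > 0" "D1 \<ge> 0" and diam: "D1 * t \<le> diameter A" "diameter A \<le> D2 * t"
  shows "inverse L * D1 powr \<gamma> * t powr \<gamma> \<le> diameter (f ` A)"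
    and "diameter (f ` A) \<le> L * D2 powr \<gamma> * t powr \<gamma>"
proof -
  have L: "L \<ge> 1" and \<gamma>: "\<gamma> > 0"
    using hb unfolding homog_bi_holder_def by auto
  have "D1 powr \<gamma> * t powr \<gamma> = (D1 * t) powr \<gamma>"
    using \<open>t > 0\<close> \<open>D1 \<ge> 0\<close> by (simp add: powr_mult)
  also have "\<dots> \<le> diameter A powr \<gamma>"
    using diam \<gamma> \<open>t > 0\<close> \<open>D1 \<ge> 0\<close> by (intro powr_mono2) auto
  also have "\<dots> \<le> L * diameter (f ` A)"
    using homog_bi_holder_diameter_image(2)[OF hb A] .
  finally show "inverse L * D1 powr \<gamma> * t powr \<gamma> \<le> diameter (f ` A)"
    using L by (simp add: field_simps)
  have "diameter (f ` A) \<le> L * diameter A powr \<gamma>"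
    using homog_bi_holder_diameter_image(1)[OF hb A] .
  also have "\<dots> \<le> L * (D2 * t) powr \<gamma>"
    using diam L \<gamma> by (intro mult_left_mono powr_mono2) (auto simp: diameter_ge_0 A)
  also have "\<dots> = L * D2 powr \<gamma> * t powr \<gamma>"
    using diam \<open>t > 0\<close> diameter_ge_0[OF \<open>bounded A\<close>]
    by (simp add: powr_mult zero_le_mult_iff)
  finally show "diameter (f ` A) \<le> L * D2 powr \<gamma> * t powr \<gamma>" .
qed

text \<open>The min and max account for unbounded tiles, where s = 1 and f preserves the junk
  diameter.\<close>
lemma pre_tiling_space_image_tile_diameter_bounds:
  assumes pts: "pre_tiling_space N s D X P" and hb: "homog_bi_holder L \<gamma> X f"
    and "D1 > 0" and T1: "\<forall>n\<in>D. \<forall>A\<in>P n.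
      D1 \<le> diameter A / s powr real_of_int n \<and> diameter A / s powr real_of_int n \<le> D2"
    and tile: "n \<in> D" "A \<in> P n"
  shows "min D1 (inverse L * D1 powr \<gamma>) \<le> diameter (f ` A) / (s powr \<gamma>) powr real_of_int n \<and>
    diameter (f ` A) / (s powr \<gamma>) powr real_of_int n \<le> max D2 (L * D2 powr \<gamma>)"
proof -
  have s: "s > 0" and tiling: "tiling_set N D X P"
    using pts unfolding pre_tiling_space_def by auto
  define t where "t = s powr real_of_int n"
  have t: "t > 0" and scale: "(s powr \<gamma>) powr real_of_int n = t powr \<gamma>"
    using s by (simp_all add: t_def powr_powr mult.commute)
  have ratio: "D1 \<le> diameter A / t" "diameter A / t \<le> D2"
    using T1 tile unfolding t_def by auto
  have "A \<subseteq> X"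
    using tiling_set_covering_structure[OF tiling] tile by (rule covering_structure_tile_subset)
  show ?thesis
  proof (cases "bounded A")
    case True
    have "D1 * t \<le> diameter A" "diameter A \<le> D2 * t"
      using ratio t by (simp_all add: pos_le_divide_eq pos_divide_le_eq)
    note image_bounds = homog_bi_holder_diameter_image_bounds[OF hb \<open>A \<subseteq> X\<close> True t _ this]
    have "inverse L * D1 powr \<gamma> \<le> diameter (f ` A) / t powr \<gamma>"
      "diameter (f ` A) / t powr \<gamma> \<le> L * D2 powr \<gamma>"
      using image_bounds \<open>D1 > 0\<close> t by (simp_all add: pos_le_divide_eq pos_divide_le_eq)
    then show ?thesis
      unfolding scale by linarith
  next
    case False
    then have "s = 1"
      using pre_tiling_space_unbounded_tile_imp_scale_one[OF pts tile] by blast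
    moreover have "diameter (f ` A) = diameter A"
      using False homog_bi_holder_bounded_image_iff[OF hb \<open>A \<subseteq> X\<close>] diameter_unbounded by metis
    ultimately show ?thesis
      using ratio unfolding scale t_def by (simp add: min_le_iff_disj le_max_iff_disj)
  qed
qed

lemma pre_tiling_space_image_diameter_bounds:
  assumes pts: "pre_tiling_space N s D X P" and hb: "homog_bi_holder L \<gamma> X f"
  shows "\<exists>D1 D2. D1 > 0 \<and> D2 > 0 \<and> (\<forall>n\<in>D. \<forall>B\<in>(\<lambda>A. f ` A) ` P n.
    D1 \<le> diameter B / (s powr \<gamma>) powr real_of_int n \<and> diameter B / (s powr \<gamma>) powr real_of_int n \<le> D2)"
proof -
  obtain D1 D2 where D: "D1 > 0" "D2 > 0" and T1: "\<forall>n\<in>D. \<forall>A\<in>P n.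
      D1 \<le> diameter A / s powr real_of_int n \<and> diameter A / s powr real_of_int n \<le> D2"
    using pts unfolding pre_tiling_space_def by blast
  have "L \<ge> 1"
    using hb unfolding homog_bi_holder_def by auto
  then have "min D1 (inverse L * D1 powr \<gamma>) > 0" "max D2 (L * D2 powr \<gamma>) > 0"
    using D by auto
  then show ?thesis
    using pre_tiling_space_image_tile_diameter_bounds[OF pts hb \<open>D1 > 0\<close> T1] by blast
qed

lemma pre_tiling_space_image_inner_balls:
  assumes pts: "pre_tiling_space N s D X P" and hb: "homog_bi_holder L \<gamma> X f"
  shows "\<exists>E>0. \<forall>n\<in>D. \<forall>B\<in>(\<lambda>A. f ` A) ` P n.
    \<exists>q\<in>B. ball q (E * (s powr \<gamma>) powr real_of_int n) \<inter> f ` X \<subseteq> B"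
proof -
  obtain E where "E > 0" and T2: "\<forall>n\<in>D. \<forall>A\<in>P n. \<exists>p\<in>A. ball p (E * s powr real_of_int n) \<inter> X \<subseteq> A"
    using pts unfolding pre_tiling_space_def by blast
  have s: "s > 0" and tiling: "tiling_set N D X P"
    using pts unfolding pre_tiling_space_def by auto
  have L: "L \<ge> 1"
    using hb unfolding homog_bi_holder_def by auto
  have inner_ball: "\<exists>q\<in>f ` A. ball q (inverse L * E powr \<gamma> * (s powr \<gamma>) powr real_of_int n) \<inter> f ` X \<subseteq> f ` A"
    if tile: "n \<in> D" "A \<in> P n" for n A
  proof -
    obtain p where "p \<in> A" and ball: "ball p (E * s powr real_of_int n) \<inter> X \<subseteq> A"
      using T2 tile by blast
    moreover have "p \<in> X"
      using covering_structure_tile_subset[OF tiling_set_covering_structure[OF tiling] tile]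
        \<open>p \<in> A\<close> by blast
    ultimately have "ball (f p) (inverse L * (E * s powr real_of_int n) powr \<gamma>) \<inter> f ` X \<subseteq> f ` A"
      using \<open>E > 0\<close> s by (intro homog_bi_holder_image_ball_subset[OF hb]) auto
    moreover have "inverse L * (E * s powr real_of_int n) powr \<gamma>
        = inverse L * E powr \<gamma> * (s powr \<gamma>) powr real_of_int n"
      using \<open>E > 0\<close> s by (simp add: powr_mult powr_powr mult.commute)
    ultimately show ?thesis
      using \<open>p \<in> A\<close> by auto
  qed
  show ?thesis
  proof (intro exI[of _ "inverse L * E powr \<gamma>"] conjI ballI)
    show "inverse L * E powr \<gamma> > 0"
      using L \<open>E > 0\<close> by simp
  next
    fix n B assume "n \<in> D" "B \<in> (\<lambda>A. f ` A) ` P n"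
    then show "\<exists>q\<in>B. ball q (inverse L * E powr \<gamma> * (s powr \<gamma>) powr real_of_int n) \<inter> f ` X \<subseteq> B"
      using inner_ball by blast
  qed
qed

theorem proposition3p11:
  fixes X :: "'a::metric_space set" and Y :: "'b::metric_space set"
    and P :: "int \<Rightarrow> 'a set set" and D :: "int set"
    and N :: nat and s L \<gamma> :: real and f :: "'a \<Rightarrow> 'b"
  assumes "pre_tiling_space N s D X P"
    and "homog_bi_holder L \<gamma> X f"
    and "f ` X = Y"
  shows "pre_tiling_space N (s powr \<gamma>) D Y (\<lambda>n. (\<lambda>A. f ` A) ` P n)"
proof -
  have "s > 0" and "tiling_set N D X P"
    using assms(1) unfolding pre_tiling_space_def by auto
  moreover have "inj_on f X"
    using assms(2) by (rule homog_bi_holder_inj_on)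
  ultimately have "s powr \<gamma> > 0" and "tiling_set N D (f ` X) (\<lambda>n. (\<lambda>A. f ` A) ` P n)"
    using tiling_set_image by auto
  then show ?thesis
    using pre_tiling_space_image_diameter_bounds[OF assms(1,2)]
      pre_tiling_space_image_inner_balls[OF assms(1,2)]
    unfolding pre_tiling_space_def assms(3) by (intro conjI)
qed

end
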